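(* For every integer $t\ge 2$ there exists a regular simple graph $\Gamma$ on $2t$ vertices such that $E(\Gamma)=E(\bar\Gamma)$ and $\Gamma$ and $\bar\Gamma$ are not isospectral.
   Context: The energy $E(\Gamma)$ is the sum of the absolute values of the adjacency eigenvalues (with multiplicity); $\bar\Gamma$ is the complement of $\Gamma$; two graphs are isospectral if their adjacency spectra (with multiplicities) coincide. *)

theory Defs
  imports "Jordan_Normal_Form.Char_Poly"
begin

definition simple_graph :: "nat \<Rightarrow> (nat \<Rightarrow> nat \<Rightarrow> bool) \<Rightarrow> bool" where
  "simple_graph n E \<longleftrightarrow> (\<forall>i j. E i j \<longrightarrow> i < n \<and> j < n) \<and>
     (\<forall>i j. E i j \<longleftrightarrow> E j i) \<and> (\<forall>i. \<not> E i i)"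

definition regular_graph :: "nat \<Rightarrow> (nat \<Rightarrow> nat \<Rightarrow> bool) \<Rightarrow> bool" where
  "regular_graph n E \<longleftrightarrow> (\<exists>k. \<forall>i<n. card {j. j < n \<and> E i j} = k)"

definition complement_graph :: "nat \<Rightarrow> (nat \<Rightarrow> nat \<Rightarrow> bool) \<Rightarrow> nat \<Rightarrow> nat \<Rightarrow> bool" where
  "complement_graph n E i j \<longleftrightarrow> i < n \<and> j < n \<and> i \<noteq> j \<and> \<not> E i j"

definition adj_matrix :: "nat \<Rightarrow> (nat \<Rightarrow> nat \<Rightarrow> bool) \<Rightarrow> complex mat" where
  "adj_matrix n E = mat n n (\<lambda>(i, j). if E i j then 1 else 0)"

definition adj_spectrum :: "nat \<Rightarrow> (nat \<Rightarrow> nat \<Rightarrow> bool) \<Rightarrow> complex multiset" where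
  "adj_spectrum n E = proots (char_poly (adj_matrix n E))"

definition graph_energy :: "nat \<Rightarrow> (nat \<Rightarrow> nat \<Rightarrow> bool) \<Rightarrow> real" where
  "graph_energy n E = (\<Sum>z\<in>#adj_spectrum n E. cmod z)"

definition isospectral :: "nat \<Rightarrow> (nat \<Rightarrow> nat \<Rightarrow> bool) \<Rightarrow> (nat \<Rightarrow> nat \<Rightarrow> bool) \<Rightarrow> bool" where
  "isospectral n E F \<longleftrightarrow> adj_spectrum n E = adj_spectrum n F"

end

theory Submission
  imports Defs
begin

(* Take for \<Gamma> the Cartesian product K\<^sub>t \<times> K\<^sub>2: two copies of the complete
   graph K\<^sub>t joined by a perfect matching. With J the all-ones t \<times> t matrix, the
   adjacency matrices of \<Gamma> and of its complement are the block matrices [X, Y; Y, X] with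
   (X, Y) = (J - I, I) and (0, J - I). Conjugating by [I, 0; I, I] makes such a matrix block
   upper triangular with diagonal blocks X + Y and X - Y, and a I + b J is similar to a
   triangular matrix with diagonal a + t b, a, ..., a. Hence \<Gamma> has spectrum t, t - 2,
   0^(t-1), (-2)^(t-1) and its complement t - 1, 1 - t, (-1)^(t-1), 1^(t-1). Both energies
   are 4 (t - 1), yet t is an eigenvalue of \<Gamma> only. *)

lemma index_mult_mat_sum:
  assumes "A \<in> carrier_mat n m" and "B \<in> carrier_mat m l" and "i < n" and "j < l"
  shows "(A * B) $$ (i, j) = (\<Sum>k<m. A $$ (i, k) * B $$ (k, j))"
  using assms by (simp add: scalar_prod_def lessThan_atLeast0)

lemma proots_prod_list_linear_factors:
  "proots (\<Prod>a\<leftarrow>as. [:- a, 1:]) = mset (as :: 'a :: idom list)"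
proof (induction as)
  case (Cons a as)
  have "(\<Prod>a\<leftarrow>as. [:- a, 1:]) \<noteq> 0"
    by (auto simp: prod_list_zero_iff)
  with Cons.IH show ?case
    by (simp add: proots_mult del: mult_pCons_left)
qed simp

lemma proots_char_poly_upper_triangular:
  fixes A :: "'a :: idom mat"
  assumes "A \<in> carrier_mat n n" and "upper_triangular A"
  shows "proots (char_poly A) = mset (diag_mat A)"
  by (simp add: char_poly_upper_triangular[OF assms] proots_prod_list_linear_factors)

lemma char_poly_nonzero: "A \<in> carrier_mat n n \<Longrightarrow> char_poly A \<noteq> 0"
  using degree_monic_char_poly[of A n] by auto

lemma similar_mat_four_block_symmetric:
  fixes X Y :: "'a :: comm_ring_1 mat"
  assumes X: "X \<in> carrier_mat n n" and Y: "Y \<in> carrier_mat n n"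
  shows "similar_mat (four_block_mat X Y Y X) (four_block_mat (X + Y) Y (0\<^sub>m n n) (X - Y))"
proof -
  let ?P = "four_block_mat (1\<^sub>m n) (0\<^sub>m n n) (1\<^sub>m n) (1\<^sub>m n) :: 'a mat"
  let ?Q = "four_block_mat (1\<^sub>m n) (0\<^sub>m n n) (- 1\<^sub>m n) (1\<^sub>m n) :: 'a mat"
  have PQ: "?P * ?Q = 1\<^sub>m (n + n)"
    by (subst mult_four_block_mat[of _ n n _ n _ n]) (auto simp flip: four_block_one_mat)
  have QP: "?Q * ?P = 1\<^sub>m (n + n)"
    by (subst mult_four_block_mat[of _ n n _ n _ n]) (auto simp flip: four_block_one_mat)
  have left: "?P * four_block_mat (X + Y) Y (0\<^sub>m n n) (X - Y) = four_block_mat (X + Y) Y (X + Y) X"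
    using X Y by (subst mult_four_block_mat[of _ n n _ n _ n]) auto
  have right: "four_block_mat (X + Y) Y (X + Y) X * ?Q = four_block_mat X Y Y X"
    using X Y by (subst mult_four_block_mat[of _ n n _ n _ n]) auto
  show ?thesis
    by (rule similar_matI[of _ _ ?P ?Q "n + n"]) (use X Y PQ QP left right in auto)
qed

lemma char_poly_four_block_lower_left_zero:
  fixes A :: "'a :: idom mat"
  assumes A: "A \<in> carrier_mat n n" and B: "B \<in> carrier_mat n m" and D: "D \<in> carrier_mat m m"
  shows "char_poly (four_block_mat A B (0\<^sub>m m n) D) = char_poly A * char_poly D"
proof -
  let ?cm = "\<lambda>A. [:0, 1:] \<cdot>\<^sub>m 1\<^sub>m (dim_row A) + map_mat (\<lambda>a. [:- a:]) A"
  have "char_poly (four_block_mat A B (0\<^sub>m m n) D)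
      = det (four_block_mat (?cm A) (map_mat (\<lambda>a. [:- a:]) B) (0\<^sub>m m n) (?cm D))"
    unfolding char_poly_defs using A B D by (intro arg_cong[where f = det] eq_matI) auto
  also have "\<dots> = char_poly A * char_poly D"
    unfolding char_poly_defs using A B D by (intro det_four_block_mat_lower_left_zero) auto
  finally show ?thesis .
qed

lemma proots_char_poly_four_block_symmetric:
  fixes X Y :: "'a :: idom mat"
  assumes "X \<in> carrier_mat n n" and "Y \<in> carrier_mat n n"
  shows "proots (char_poly (four_block_mat X Y Y X))
    = proots (char_poly (X + Y)) + proots (char_poly (X - Y))"
proof -
  have XY: "X + Y \<in> carrier_mat n n" "X - Y \<in> carrier_mat n n"
    using assms by auto
  then have "char_poly (four_block_mat X Y Y X) = char_poly (X + Y) * char_poly (X - Y)"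
    using assms by (simp add: char_poly_similar[OF similar_mat_four_block_symmetric]
        char_poly_four_block_lower_left_zero[of _ n _ n])
  then show ?thesis
    using XY by (simp add: proots_mult char_poly_nonzero[of _ n])
qed

definition shear_mat :: "nat \<Rightarrow> 'a :: comm_ring_1 \<Rightarrow> 'a mat" where
  "shear_mat n c = mat n n (\<lambda>(i, j). if i = j then 1 else if j = 0 then c else 0)"

lemma shear_mat_carrier [simp]: "shear_mat n c \<in> carrier_mat n n"
  by (simp add: shear_mat_def)

lemma shear_mat_dim [simp]: "dim_row (shear_mat n c) = n" "dim_col (shear_mat n c) = n"
  by (simp_all add: shear_mat_def)

lemma index_shear_mat_mult:
  assumes "B \<in> carrier_mat n m" and "i < n" and "j < m"
  shows "(shear_mat n c * B) $$ (i, j) = B $$ (i, j) + (if i = 0 then 0 else c * B $$ (0, j))"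
proof -
  have "(shear_mat n c * B) $$ (i, j) = (\<Sum>k<n. shear_mat n c $$ (i, k) * B $$ (k, j))"
    using assms by (intro index_mult_mat_sum) auto
  also have "\<dots>
      = (\<Sum>k<n. (if k = i then B $$ (i, j) else 0) + (if k = 0 \<and> i \<noteq> 0 then c * B $$ (0, j) else 0))"
    using assms by (intro sum.cong) (auto simp: shear_mat_def)
  finally show ?thesis
    using assms by (simp add: sum.distrib)
qed

lemma index_mult_shear_mat:
  assumes "A \<in> carrier_mat m n" and "i < m" and "j < n"
  shows "(A * shear_mat n c) $$ (i, j)
    = (if j = 0 then A $$ (i, 0) + c * (\<Sum>k\<in>{1..<n}. A $$ (i, k)) else A $$ (i, j))"
proof -
  have interval: "{..<n} \<inter> {k. 0 < k} = {1..<n}"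
    by auto
  have "(A * shear_mat n c) $$ (i, j) = (\<Sum>k<n. A $$ (i, k) * shear_mat n c $$ (k, j))"
    using assms by (intro index_mult_mat_sum) auto
  also have "\<dots>
      = (\<Sum>k<n. (if k = j then A $$ (i, j) else 0) + (if j = 0 \<and> k \<noteq> 0 then c * A $$ (i, k) else 0))"
    using assms by (intro sum.cong) (auto simp: shear_mat_def)
  also have "\<dots> = A $$ (i, j) + (if j = 0 then c * (\<Sum>k\<in>{1..<n}. A $$ (i, k)) else 0)"
    using assms interval by (simp add: sum.distrib sum.If_cases sum_distrib_left)
  finally show ?thesis
    by simp
qed

lemma shear_mat_mult: "shear_mat n c * shear_mat n d = shear_mat n (c + d)"
proof (rule eq_matI)
  fix i j
  assume "i < dim_row (shear_mat n (c + d))" and "j < dim_col (shear_mat n (c + d))"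
  then show "(shear_mat n c * shear_mat n d) $$ (i, j) = shear_mat n (c + d) $$ (i, j)"
    by (simp add: index_shear_mat_mult[of _ n n] del: index_mult_mat(1)) (simp add: shear_mat_def)
qed (auto simp: shear_mat_def)

lemma shear_mat_zero: "shear_mat n 0 = 1\<^sub>m n"
  by (rule eq_matI) (auto simp: shear_mat_def)

definition scalar_ones_mat :: "nat \<Rightarrow> 'a :: comm_ring_1 \<Rightarrow> 'a \<Rightarrow> 'a mat" where
  "scalar_ones_mat n a b = mat n n (\<lambda>(i, j). (if i = j then a else 0) + b)"

lemma scalar_ones_mat_carrier [simp]: "scalar_ones_mat n a b \<in> carrier_mat n n"
  by (simp add: scalar_ones_mat_def)

lemma scalar_ones_mat_dim [simp]:
  "dim_row (scalar_ones_mat n a b) = n" "dim_col (scalar_ones_mat n a b) = n"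
  by (simp_all add: scalar_ones_mat_def)

lemma scalar_ones_mat_add:
  "scalar_ones_mat n a b + scalar_ones_mat n c d = scalar_ones_mat n (a + c) (b + d)"
  by (rule eq_matI) (auto simp: scalar_ones_mat_def)

lemma scalar_ones_mat_minus:
  "scalar_ones_mat n a b - scalar_ones_mat n c d = scalar_ones_mat n (a - c) (b - d)"
  by (rule eq_matI) (auto simp: scalar_ones_mat_def)

definition scalar_ones_upper_mat :: "nat \<Rightarrow> 'a :: comm_ring_1 \<Rightarrow> 'a \<Rightarrow> 'a mat" where
  "scalar_ones_upper_mat n a b = mat n n (\<lambda>(i, j).
     if i = j then (if i = 0 then a + of_nat n * b else a) else if i = 0 then b else 0)"

lemma scalar_ones_upper_mat_carrier [simp]: "scalar_ones_upper_mat n a b \<in> carrier_mat n n"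
  by (simp add: scalar_ones_upper_mat_def)

lemma scalar_ones_upper_mat_dim [simp]:
  "dim_row (scalar_ones_upper_mat n a b) = n" "dim_col (scalar_ones_upper_mat n a b) = n"
  by (simp_all add: scalar_ones_upper_mat_def)

lemma upper_triangular_scalar_ones_upper_mat: "upper_triangular (scalar_ones_upper_mat n a b)"
  by (auto simp: upper_triangular_def scalar_ones_upper_mat_def)

lemma diag_scalar_ones_upper_mat:
  assumes "0 < n"
  shows "diag_mat (scalar_ones_upper_mat n a b) = (a + of_nat n * b) # replicate (n - 1) a"
  using assms by (intro nth_equalityI) (auto simp: diag_mat_def scalar_ones_upper_mat_def nth_Cons')

lemma scalar_ones_mat_mult_shear:
  "scalar_ones_mat n a b * shear_mat n 1 = shear_mat n 1 * scalar_ones_upper_mat n a b"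
proof (rule eq_matI)
  fix i j
  assume "i < dim_row (shear_mat n 1 * scalar_ones_upper_mat n a b)"
    and "j < dim_col (shear_mat n 1 * scalar_ones_upper_mat n a b)"
  then have ij: "i < n" "j < n"
    by auto
  show "(scalar_ones_mat n a b * shear_mat n 1) $$ (i, j)
      = (shear_mat n 1 * scalar_ones_upper_mat n a b) $$ (i, j)"
    using ij
    by (simp add: index_mult_shear_mat[of _ n] index_shear_mat_mult[of _ _ n] del: index_mult_mat(1))
      (auto simp: scalar_ones_mat_def scalar_ones_upper_mat_def sum.distrib of_nat_diff algebra_simps)
qed auto

lemma similar_scalar_ones_upper_mat:
  "similar_mat (scalar_ones_mat n a b) (scalar_ones_upper_mat n a b)"
proof (rule similar_matI[of _ _ "shear_mat n 1" "shear_mat n (- 1)" n])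
  have "scalar_ones_mat n a b = scalar_ones_mat n a b * shear_mat n 1 * shear_mat n (- 1)"
    by (simp add: assoc_mult_mat[of _ n n _ n _ n] shear_mat_mult shear_mat_zero
        right_mult_one_mat[OF scalar_ones_mat_carrier])
  then show "scalar_ones_mat n a b = shear_mat n 1 * scalar_ones_upper_mat n a b * shear_mat n (- 1)"
    by (simp add: scalar_ones_mat_mult_shear)
qed (auto simp: shear_mat_mult shear_mat_zero)

lemma proots_char_poly_scalar_ones_mat:
  fixes a b :: "'a :: idom"
  assumes "0 < n"
  shows "proots (char_poly (scalar_ones_mat n a b))
    = add_mset (a + of_nat n * b) (replicate_mset (n - 1) a)"
  using assms
  by (simp add: char_poly_similar[OF similar_scalar_ones_upper_mat] diag_scalar_ones_upper_mat
      proots_char_poly_upper_triangular[OF scalar_ones_upper_mat_carrier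
        upper_triangular_scalar_ones_upper_mat])

definition complete_prism :: "nat \<Rightarrow> nat \<Rightarrow> nat \<Rightarrow> bool" where
  "complete_prism t i j \<longleftrightarrow>
     i < 2 * t \<and> j < 2 * t \<and> i \<noteq> j \<and> ((i < t \<longleftrightarrow> j < t) \<or> j = i + t \<or> i = j + t)"

lemma simple_graph_complete_prism: "simple_graph (2 * t) (complete_prism t)"
  unfolding simple_graph_def complete_prism_def by auto

lemma regular_graph_complete_prism: "regular_graph (2 * t) (complete_prism t)"
  unfolding regular_graph_def
proof (intro exI allI impI)
  fix i
  assume i: "i < 2 * t"
  show "card {j. j < 2 * t \<and> complete_prism t i j} = t"
  proof (cases "i < t")
    case True
    then have "{j. j < 2 * t \<and> complete_prism t i j} = insert (i + t) ({..<t} - {i})"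
      unfolding complete_prism_def by auto
    then show ?thesis
      using True by simp
  next
    case False
    then have "{j. j < 2 * t \<and> complete_prism t i j} = insert (i - t) ({t..<2 * t} - {i})"
      using i unfolding complete_prism_def by auto
    moreover have "i - t \<notin> {t..<2 * t} - {i}" and "card ({t..<2 * t} - {i}) = t - 1"
      using False i by auto
    ultimately show ?thesis
      using False i by simp
  qed
qed

lemma adj_matrix_complete_prism:
  "adj_matrix (2 * t) (complete_prism t)
     = four_block_mat (scalar_ones_mat t (- 1) 1) (scalar_ones_mat t 1 0)
         (scalar_ones_mat t 1 0) (scalar_ones_mat t (- 1) 1)"
  by (rule eq_matI) (auto simp: adj_matrix_def scalar_ones_mat_def complete_prism_def)

lemma adj_matrix_complement_complete_prism:
  "adj_matrix (2 * t) (complement_graph (2 * t) (complete_prism t))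
     = four_block_mat (scalar_ones_mat t 0 0) (scalar_ones_mat t (- 1) 1)
         (scalar_ones_mat t (- 1) 1) (scalar_ones_mat t 0 0)"
  by (rule eq_matI)
    (auto simp: adj_matrix_def scalar_ones_mat_def complete_prism_def complement_graph_def)

lemma adj_spectrum_complete_prism:
  assumes "0 < t"
  shows "adj_spectrum (2 * t) (complete_prism t)
    = add_mset (of_nat t) (replicate_mset (t - 1) 0)
      + add_mset (of_nat t - 2) (replicate_mset (t - 1) (- 2))"
  using assms
  by (simp add: adj_spectrum_def adj_matrix_complete_prism
      proots_char_poly_four_block_symmetric[of _ t] scalar_ones_mat_add scalar_ones_mat_minus proots_char_poly_scalar_ones_mat)

lemma adj_spectrum_complement_complete_prism:
  assumes "0 < t"
  shows "adj_spectrum (2 * t) (complement_graph (2 * t) (complete_prism t))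
    = add_mset (of_nat t - 1) (replicate_mset (t - 1) (- 1))
      + add_mset (1 - of_nat t) (replicate_mset (t - 1) 1)"
  using assms
  by (simp add: adj_spectrum_def adj_matrix_complement_complete_prism
      proots_char_poly_four_block_symmetric[of _ t] scalar_ones_mat_add scalar_ones_mat_minus proots_char_poly_scalar_ones_mat)

lemma graph_energy_complete_prism:
  assumes "2 \<le> t"
  shows "graph_energy (2 * t) (complete_prism t) = 4 * (real t - 1)"
proof -
  have "0 < t"
    using assms by simp
  obtain s where "t = s + 2"
    using assms by (metis add.commute le_Suc_ex)
  then have "cmod (of_nat t - 2) = real t - 2"
    by simp
  then show ?thesis
    unfolding graph_energy_def adj_spectrum_complete_prism[OF \<open>0 < t\<close>]
    using assms by (simp add: of_nat_diff)
qed

lemma graph_energy_complement_complete_prism: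
  assumes "0 < t"
  shows "graph_energy (2 * t) (complement_graph (2 * t) (complete_prism t)) = 4 * (real t - 1)"
proof -
  obtain s where "t = s + 1"
    using assms by (metis Suc_eq_plus1 gr0_conv_Suc)
  then have "cmod (of_nat t - 1) = real t - 1" and "cmod (1 - of_nat t) = real t - 1"
    by simp_all
  then show ?thesis
    unfolding graph_energy_def adj_spectrum_complement_complete_prism[OF assms]
    using assms by (simp add: of_nat_diff)
qed

lemma not_isospectral_complement_complete_prism:
  assumes "2 \<le> t"
  shows "\<not> isospectral (2 * t) (complete_prism t) (complement_graph (2 * t) (complete_prism t))"
proof
  have "0 < t"
    using assms by simp
  have "of_nat t \<in># adj_spectrum (2 * t) (complete_prism t)"
    by (simp add: adj_spectrum_complete_prism[OF \<open>0 < t\<close>])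
  moreover assume "isospectral (2 * t) (complete_prism t) (complement_graph (2 * t) (complete_prism t))"
  ultimately have "of_nat t \<in># adj_spectrum (2 * t) (complement_graph (2 * t) (complete_prism t))"
    by (simp add: isospectral_def)
  then show False
    using assms by (auto simp: adj_spectrum_complement_complete_prism[OF \<open>0 < t\<close>] complex_eq_iff)
qed

theorem mainTheorem5:
  fixes t :: nat
  assumes "t \<ge> 2"
  shows "\<exists>E. simple_graph (2 * t) E \<and> regular_graph (2 * t) E \<and>
           graph_energy (2 * t) E = graph_energy (2 * t) (complement_graph (2 * t) E) \<and>
           \<not> isospectral (2 * t) E (complement_graph (2 * t) E)"
proof (intro exI conjI)
  show "simple_graph (2 * t) (complete_prism t)"
    by (rule simple_graph_complete_prism)
  show "regular_graph (2 * t) (complete_prism t)"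
    by (rule regular_graph_complete_prism)
  show "graph_energy (2 * t) (complete_prism t)
      = graph_energy (2 * t) (complement_graph (2 * t) (complete_prism t))"
    using assms by (simp add: graph_energy_complete_prism graph_energy_complement_complete_prism)
  show "\<not> isospectral (2 * t) (complete_prism t) (complement_graph (2 * t) (complete_prism t))"
    using assms by (rule not_isospectral_complement_complete_prism)
qed

end
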